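(* Let $(\Gamma,\rho)$ be a weakly connected voltage graph with finite voltage group $G$. Then for any two vertices $v_i,v_j$ of $\Gamma$, $|\mathrm{Net}(v_i,V)|=|\mathrm{Net}(v_j,V)|$.
   Context: $\Gamma=(V,E)$ simple digraph, $e_{ij}$ the edge $v_i\to v_j$, $\rho:E\to G$. Semi-walk $w=v_{i_1}a_1\dots a_{n-1}v_{i_n}$ with each $a_j\in\{e_{i_ji_{j+1}},e_{i_{j+1}i_j}\}$; weakly connected: any two vertices joined by a semi-walk. Net voltage $f(w)=\bar\rho(a_1)\cdots\bar\rho(a_{n-1})$ with $\bar\rho(a_j)=\rho(a_j)$ for forward and $\rho(a_j)^{-1}$ for backward edges ($f=\mathbf 1$ on a single vertex). $\mathrm{Net}(v_i,V)=\{f(w): w$ a semi-walk starting at $v_i$ (ending anywhere)$\}$. *)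

theory Defs
  imports "HOL-Algebra.Group"
begin

definition simple_digraph :: "'v set \<Rightarrow> ('v \<times> 'v) set \<Rightarrow> bool" where
  "simple_digraph V E \<longleftrightarrow> finite V \<and> E \<subseteq> V \<times> V \<and> (\<forall>v. (v, v) \<notin> E)"

text \<open>A semi-walk starting at u is given by a list of steps (b, w):
  b = True means the forward edge (current, w) is used, b = False the backward edge (w, current).\<close>
fun semi_walk :: "('v \<times> 'v) set \<Rightarrow> 'v \<Rightarrow> (bool \<times> 'v) list \<Rightarrow> bool" where
  "semi_walk E u [] = True"
| "semi_walk E u ((b, w) # s) =
     ((if b then (u, w) \<in> E else (w, u) \<in> E) \<and> semi_walk E w s)"

definition walk_end :: "'v \<Rightarrow> (bool \<times> 'v) list \<Rightarrow> 'v" where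
  "walk_end u s = last (u # map snd s)"

definition weakly_connected :: "'v set \<Rightarrow> ('v \<times> 'v) set \<Rightarrow> bool" where
  "weakly_connected V E \<longleftrightarrow>
     (\<forall>u\<in>V. \<forall>w\<in>V. \<exists>s. semi_walk E u s \<and> walk_end u s = w)"

fun net_voltage :: "('g, 'b) monoid_scheme \<Rightarrow> ('v \<times> 'v \<Rightarrow> 'g) \<Rightarrow> 'v \<Rightarrow> (bool \<times> 'v) list \<Rightarrow> 'g" where
  "net_voltage G \<rho> u [] = \<one>\<^bsub>G\<^esub>"
| "net_voltage G \<rho> u ((b, w) # s) =
     (if b then \<rho> (u, w) else inv\<^bsub>G\<^esub> (\<rho> (w, u))) \<otimes>\<^bsub>G\<^esub> net_voltage G \<rho> w s"

definition Net :: "('g, 'b) monoid_scheme \<Rightarrow> ('v \<times> 'v) set \<Rightarrow> ('v \<times> 'v \<Rightarrow> 'g) \<Rightarrow> 'v \<Rightarrow> 'g set" where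
  "Net G E \<rho> u = {net_voltage G \<rho> u s | s. semi_walk E u s}"

end

theory Submission
  imports Defs
begin

text \<open>Fix a semi-walk \<open>p\<close> from \<open>v\<^sub>i\<close> to \<open>v\<^sub>j\<close>. Prefixing \<open>p\<close> turns every semi-walk starting at
  \<open>v\<^sub>j\<close> into one starting at \<open>v\<^sub>i\<close> and multiplies its net voltage on the left by \<open>f(p)\<close>. Left
  translation by \<open>f(p)\<close> is injective on \<open>G\<close>, so \<open>|Net(v\<^sub>j,V)| \<le> |Net(v\<^sub>i,V)|\<close>; weak connectivity
  gives a semi-walk in the other direction as well.\<close>

lemma semi_walk_append:
  "semi_walk E u (s @ t) \<longleftrightarrow> semi_walk E u s \<and> semi_walk E (walk_end u s) t"
proof (induction s arbitrary: u)
  case Nil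
  then show ?case by (simp add: walk_end_def)
next
  case (Cons step s)
  then show ?case by (cases step) (simp add: walk_end_def)
qed

context group
begin

lemma net_voltage_closed:
  assumes "\<forall>e\<in>E. \<rho> e \<in> carrier G" and "semi_walk E u s"
  shows "net_voltage G \<rho> u s \<in> carrier G"
  using assms(2)
proof (induction s arbitrary: u)
  case Nil
  then show ?case by simp
next
  case (Cons step s)
  then show ?case using assms(1) by (cases step) (auto split: if_splits)
qed

lemma Net_subset_carrier:
  assumes "\<forall>e\<in>E. \<rho> e \<in> carrier G"
  shows "Net G E \<rho> u \<subseteq> carrier G"
  using net_voltage_closed[OF assms] by (auto simp: Net_def)

lemma net_voltage_append:
  assumes "\<forall>e\<in>E. \<rho> e \<in> carrier G" and "semi_walk E u (s @ t)"
  shows "net_voltage G \<rho> u (s @ t) =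
    net_voltage G \<rho> u s \<otimes> net_voltage G \<rho> (walk_end u s) t"
  using assms(2)
proof (induction s arbitrary: u)
  case Nil
  then show ?case using net_voltage_closed[OF assms(1)] by (simp add: walk_end_def)
next
  case (Cons step s)
  obtain b w where step: "step = (b, w)" by (cases step)
  have walks: "semi_walk E w (s @ t)" "semi_walk E w s" "semi_walk E (walk_end w s) t"
    using Cons.prems step semi_walk_append[of E w s t] by auto
  have "(if b then \<rho> (u, w) else inv (\<rho> (w, u))) \<in> carrier G"
    using Cons.prems step assms(1) by (auto split: if_splits)
  moreover have "walk_end u (step # s) = walk_end w s"
    using step by (simp add: walk_end_def)
  ultimately show ?case
    using Cons.IH[OF walks(1)] net_voltage_closed[OF assms(1)] walks step
    by (simp add: m_assoc)
qed

lemma net_voltage_mult_Net_subset: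
  assumes "\<forall>e\<in>E. \<rho> e \<in> carrier G" and "semi_walk E u p"
  shows "(\<lambda>x. net_voltage G \<rho> u p \<otimes> x) ` Net G E \<rho> (walk_end u p) \<subseteq> Net G E \<rho> u"
proof
  fix y
  assume "y \<in> (\<lambda>x. net_voltage G \<rho> u p \<otimes> x) ` Net G E \<rho> (walk_end u p)"
  then obtain s where s: "semi_walk E (walk_end u p) s"
    and y: "y = net_voltage G \<rho> u p \<otimes> net_voltage G \<rho> (walk_end u p) s"
    by (auto simp: Net_def)
  have ps: "semi_walk E u (p @ s)"
    using assms(2) s by (simp add: semi_walk_append)
  moreover have "net_voltage G \<rho> u (p @ s) = y"
    using net_voltage_append[OF assms(1) ps] y by simp
  ultimately show "y \<in> Net G E \<rho> u"
    unfolding Net_def by blast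
qed

lemma card_Net_walk_end_le:
  assumes "finite (carrier G)" and "\<forall>e\<in>E. \<rho> e \<in> carrier G" and "semi_walk E u p"
  shows "card (Net G E \<rho> (walk_end u p)) \<le> card (Net G E \<rho> u)"
proof (rule card_inj_on_le)
  show "inj_on (\<lambda>x. net_voltage G \<rho> u p \<otimes> x) (Net G E \<rho> (walk_end u p))"
    using inj_on_cmult[OF net_voltage_closed[OF assms(2,3)]] Net_subset_carrier[OF assms(2)]
    by (rule inj_on_subset)
  show "(\<lambda>x. net_voltage G \<rho> u p \<otimes> x) ` Net G E \<rho> (walk_end u p) \<subseteq> Net G E \<rho> u"
    using net_voltage_mult_Net_subset[OF assms(2,3)] .
  show "finite (Net G E \<rho> u)"
    using Net_subset_carrier[OF assms(2)] assms(1) by (rule finite_subset)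
qed

end

theorem lemma5:
  fixes G :: "('g, 'b) monoid_scheme" and V :: "'v set" and E :: "('v \<times> 'v) set"
    and \<rho> :: "'v \<times> 'v \<Rightarrow> 'g"
  assumes "group G" and "finite (carrier G)"
    and "simple_digraph V E"
    and "\<forall>e\<in>E. \<rho> e \<in> carrier G"
    and "weakly_connected V E"
    and "vi \<in> V" and "vj \<in> V"
  shows "card (Net G E \<rho> vi) = card (Net G E \<rho> vj)"
proof -
  obtain p where p: "semi_walk E vi p" "walk_end vi p = vj"
    using assms(5-7) by (auto simp: weakly_connected_def)
  obtain q where q: "semi_walk E vj q" "walk_end vj q = vi"
    using assms(5-7) by (auto simp: weakly_connected_def)
  have "card (Net G E \<rho> vj) \<le> card (Net G E \<rho> vi)"
    using group.card_Net_walk_end_le[OF assms(1,2,4) p(1)] p(2) by simp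
  moreover have "card (Net G E \<rho> vi) \<le> card (Net G E \<rho> vj)"
    using group.card_Net_walk_end_le[OF assms(1,2,4) q(1)] q(2) by simp
  ultimately show ?thesis
    by simp
qed

end
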